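(* Assume $\sum_j2^j\eta_j=\infty$, $\theta<1$ and $\widetilde h=\infty$. Then with probability one: (1) for every $u\in\mathcal{U}$, the set $u\mathcal{U}^*\cap\widetilde S$ is nonempty; (2) there is a real $\widetilde\kappa\ge1$ such that $\#\widetilde S_j\le\widetilde\kappa\,2^j\eta_{j-1}j^2$ for all $j\ge1$; (3) if $\theta<0$ then $\Theta=\emptyset$; if $\theta\ge0$ then there is a real $\kappa\ge1$ such that $\#S_j\le\kappa\,2^{(1-\theta)j/2}\prod_{\ell=\underline{j}}^{j-1}\gamma_\ell$ for all $j\ge0$ (empty products equal $1$).
   Context: Let $\mathbb{T}=\mathbb{R}/\mathbb{Z}$ with canonical surjection $\phi:\mathbb{R}\to\mathbb{T}$. Let $\mathcal{U}=\{\varnothing\}\cup\bigcup_{j\ge1}\{0,1\}^j$ be the set of finite words over $\{0,1\}$; for $u=u_1\dots u_j$ write $|u|=j$ ($|\varnothing|=0$), $\pi(u)=u_1\dots u_{j-1}$ for $j\ge1$, $\mathcal{U}^*=\mathcal{U}\setminus\{\varnothing\}$, and $u\mathcal{U}$ (resp. $u\mathcal{U}^*$) for the words $uw$ with $w\in\mathcal{U}$ (resp. $w\in\mathcal{U}^*$). For each $j\ge0$, $\nu_{0,j},\nu_{1,j}$ are probability measures on $\{0,1\}^2$, and $X=(X_u)_{u\in\mathcal{U}}$ is a $\{0,1\}$-valued process with $\mathbb{P}((X_{u0},X_{u1})\in A\mid\mathcal{G}_u)=\nu_{X_u,|u|}(A)$ for all $u$, $A\subseteq\{0,1\}^2$,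 where $\mathcal{G}_u=\sigma(X_v:v\in\mathcal{U}\setminus u\mathcal{U}^* )$. Fix $\underline{h}>0$. Parameters: $\gamma_j=2\nu_{1,j}(\{(1,1)\})+\nu_{1,j}(\{(1,0),(0,1)\})$; $\eta_j=1-\nu_{0,j}(\{(0,0)\})$; $\underline{j}=\inf\{j_0\ge0:\gamma_j>0\ \forall j\ge j_0\}$; $\theta=\liminf_j\frac{\log\gamma_{\underline{j}}+\dots+\log\gamma_j}{j\log2}$ if $\underline{j}<\infty$, else $-\infty$; $\widetilde h=\inf\{h>0:\sum_j2^{(1-\underline{h}/h)j}\eta_j=\infty\}$ ($\inf\emptyset=\infty$). $S_j=\{u:|u|=j,X_u=1\}$; $\widetilde S=\{u\in\mathcal{U}^*:X_u=1,X_{\pi(u)}=0\}$ and $\widetilde S_j=\widetilde S\cap\{0,1\}^j$. $\Theta$: for $u\in\mathcal{U}$, $\tau_u=\{v\in u\mathcal{U}:X_{v_1\dots v_j}=1\ \forall j\in\{|u|,\dots,|v|\}\}$, $\partial\tau_u=\{\zeta\in\{0,1\}^{\mathbb{N}}:\zeta_1\dots\zeta_j\in\tau_u\ \forall j\ge|u|\}$, and $\Theta=\phi(\{\sum_{j\ge1}\zeta_j2^{-j}:u\in\mathcal{U},\zeta\in\partial\tau_u\})$. *)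

theory Defs
  imports "HOL-Probability.Probability"
begin

text \<open>Words over {0,1} are bool lists (False = 0, True = 1); the word u0 is u @ [False],
  u1 is u @ [True]; |u| = length u; \<pi>(u) = butlast u.
  The measures \<nu>_{i,j} on {0,1}^2 are pmfs nu i j on bool \<times> bool (i = X_u, False = 0).
  The process X : bool list \<Rightarrow> \<Omega> \<Rightarrow> bool, X u \<omega> = True meaning X_u = 1.\<close>

definition strict_desc :: "bool list \<Rightarrow> bool list set" where
  "strict_desc u = {u @ w | w. w \<noteq> []}"

definition G_alg :: "'a measure \<Rightarrow> (bool list \<Rightarrow> 'a \<Rightarrow> bool) \<Rightarrow> bool list \<Rightarrow> 'a measure" where
  "G_alg M X u = sigma (space M) {X v -` B \<inter> space M | v B. v \<notin> strict_desc u}"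

definition branching_process ::
  "'a measure \<Rightarrow> (bool \<Rightarrow> nat \<Rightarrow> (bool \<times> bool) pmf) \<Rightarrow> (bool list \<Rightarrow> 'a \<Rightarrow> bool) \<Rightarrow> bool" where
  "branching_process M nu X \<longleftrightarrow>
     prob_space M \<and>
     (\<forall>u. X u \<in> measurable M (count_space UNIV)) \<and>
     (\<forall>u A. AE \<omega> in M.
        real_cond_exp M (G_alg M X u)
          (indicator {\<omega>\<in>space M. (X (u @ [False]) \<omega>, X (u @ [True]) \<omega>) \<in> A}) \<omega>
        = measure_pmf.prob (nu (X u \<omega>) (length u)) A)"

definition gamma :: "(bool \<Rightarrow> nat \<Rightarrow> (bool \<times> bool) pmf) \<Rightarrow> nat \<Rightarrow> real" where
  "gamma nu j = 2 * pmf (nu True j) (True, True)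
     + measure_pmf.prob (nu True j) {(True, False), (False, True)}"

definition eta :: "(bool \<Rightarrow> nat \<Rightarrow> (bool \<times> bool) pmf) \<Rightarrow> nat \<Rightarrow> real" where
  "eta nu j = 1 - pmf (nu False j) (False, False)"

definition jlow :: "(bool \<Rightarrow> nat \<Rightarrow> (bool \<times> bool) pmf) \<Rightarrow> enat" where
  "jlow nu = (if \<exists>j0. \<forall>j\<ge>j0. gamma nu j > 0
              then enat (LEAST j0. \<forall>j\<ge>j0. gamma nu j > 0) else \<infinity>)"

definition theta :: "(bool \<Rightarrow> nat \<Rightarrow> (bool \<times> bool) pmf) \<Rightarrow> ereal" where
  "theta nu = (if jlow nu < \<infinity> then
      liminf (\<lambda>j. ereal ((\<Sum>l\<in>{the_enat (jlow nu)..j}. ln (gamma nu l)) / (real j * ln 2)))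
    else -\<infinity>)"

definition htilde :: "(bool \<Rightarrow> nat \<Rightarrow> (bool \<times> bool) pmf) \<Rightarrow> real \<Rightarrow> ereal" where
  "htilde nu hl = Inf (ereal ` {h. h > 0 \<and>
      (\<Sum>j. ennreal (2 powr ((1 - hl / h) * real j) * eta nu j)) = \<top>})"

definition S_set :: "(bool list \<Rightarrow> 'a \<Rightarrow> bool) \<Rightarrow> 'a \<Rightarrow> nat \<Rightarrow> bool list set" where
  "S_set X \<omega> j = {u. length u = j \<and> X u \<omega>}"

definition Stilde :: "(bool list \<Rightarrow> 'a \<Rightarrow> bool) \<Rightarrow> 'a \<Rightarrow> bool list set" where
  "Stilde X \<omega> = {u. u \<noteq> [] \<and> X u \<omega> \<and> \<not> X (butlast u) \<omega>}"

definition Stilde_j :: "(bool list \<Rightarrow> 'a \<Rightarrow> bool) \<Rightarrow> 'a \<Rightarrow> nat \<Rightarrow> bool list set" where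
  "Stilde_j X \<omega> j = {u \<in> Stilde X \<omega>. length u = j}"

text \<open>\<tau>_u; a prefix v_1\<dots>v_j is take j v\<close>
definition tau :: "(bool list \<Rightarrow> 'a \<Rightarrow> bool) \<Rightarrow> 'a \<Rightarrow> bool list \<Rightarrow> bool list set" where
  "tau X \<omega> u = {v. (\<exists>w. v = u @ w) \<and> (\<forall>j\<in>{length u..length v}. X (take j v) \<omega>)}"

text \<open>\<partial>\<tau>_u; a sequence \<zeta> = (\<zeta>_1,\<zeta>_2,\<dots>) is represented as \<zeta> :: nat \<Rightarrow> bool with \<zeta>_k = \<zeta> (k-1),
  so \<zeta>_1\<dots>\<zeta>_j = map \<zeta> [0..<j]\<close>
definition boundary :: "(bool list \<Rightarrow> 'a \<Rightarrow> bool) \<Rightarrow> 'a \<Rightarrow> bool list \<Rightarrow> (nat \<Rightarrow> bool) set" where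
  "boundary X \<omega> u = {\<zeta>. \<forall>j\<ge>length u. map \<zeta> [0..<j] \<in> tau X \<omega> u}"

text \<open>\<Theta> \<subseteq> \<TT> = \<real>/\<int>, with \<TT> represented by [0,1) and \<phi> = frac\<close>
definition Theta :: "(bool list \<Rightarrow> 'a \<Rightarrow> bool) \<Rightarrow> 'a \<Rightarrow> real set" where
  "Theta X \<omega> = frac ` {(\<Sum>k. (if \<zeta> k then 1 else 0) / 2 ^ (k + 1)) | u \<zeta>. \<zeta> \<in> boundary X \<omega> u}"

end

theory Submission
  imports Defs
begin

text \<open>
  All three statements are obtained from first-moment estimates. The only probabilistic
  input is the defining property of branching_process: conditionally on G_u, the pair of
  children of u is distributed according to nu (X u) |u|, so the probability of an event
  of G_u on which X u is constant, intersected with a condition on the children of u,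
  factorises (lemma prob_children_factor).

  (1) If no node below u lies in Stilde, then either the whole subtree of u carries 1
      or some subtree carries only 0. The first event has probability at most
      2^-n times a product of n gammas (the expected number of 1-paths of length n),
      which is arbitrarily small since theta < 1; the second one has probability at
      most the product of (1 - eta_{|v|+i})^(2^i), which tends to 0 since
      sum 2^j eta_j diverges.
  (2) E #Stilde_{j+1} <= 2^(j+1) eta_j; Markov's inequality with the weights (j+1)^2
      and the Borel-Cantelli lemma give the almost sure bound.
  (3) If theta < 0 the expected number of 1-paths of length n from any node tends to 0,
      so almost surely there is no infinite path and Theta is empty. If theta >= 0 the
      expectations satisfy E #S_(k+1) <= gamma_k E #S_k + 2^(k+1) eta_k; since
      htilde = infinity the error term is subexponential, and Markov plus Borel-Cantelli
      yield the bound.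
\<close>

lemma finitely_determined_event:
  fixes X :: "'v \<Rightarrow> 'a \<Rightarrow> bool"
  assumes fin: "finite V" and sp: "space N = space M"
    and meas: "\<And>v. v \<in> V \<Longrightarrow> {\<omega>\<in>space M. X v \<omega>} \<in> sets N"
    and dep: "\<And>\<omega> \<omega>'. \<omega> \<in> space M \<Longrightarrow> \<omega>' \<in> space M \<Longrightarrow> (\<forall>v\<in>V. X v \<omega> = X v \<omega>') \<Longrightarrow> P \<omega> = P \<omega>'"
  shows "{\<omega>\<in>space M. P \<omega>} \<in> sets N"
proof -
  define Q where "Q f = {\<omega>\<in>space M. \<forall>v\<in>V. X v \<omega> = f v}" for f
  have Q_sets: "{\<omega>\<in>space M. \<forall>v\<in>W. X v \<omega> = f v} \<in> sets N" if "W \<subseteq> V" for W f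
  proof -
    have "finite W" using that fin finite_subset by blast
    then show ?thesis using that
    proof (induction W rule: finite_induct)
      case empty
      then show ?case using sp sets.top[of N] by simp
    next
      case (insert v W)
      have "{\<omega>\<in>space M. X v \<omega> = f v} \<in> sets N"
      proof (cases "f v")
        case False
        then have "{\<omega>\<in>space M. X v \<omega> = f v} = space N - {\<omega>\<in>space M. X v \<omega>}" using sp by auto
        then show ?thesis using meas insert by auto
      qed (use meas insert in auto)
      moreover have "{\<omega>\<in>space M. \<forall>v'\<in>insert v W. X v' \<omega> = f v'} =
          {\<omega>\<in>space M. \<forall>v\<in>W. X v \<omega> = f v} \<inter> {\<omega>\<in>space M. X v \<omega> = f v}" by auto
      ultimately show ?case using insert by auto
    qed
  qed
  define F where "F = (\<lambda>\<omega>. restrict (\<lambda>v. X v \<omega>) V) ` {\<omega>\<in>space M. P \<omega>}"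
  have "F \<subseteq> V \<rightarrow>\<^sub>E UNIV" unfolding F_def by auto
  then have "finite F" using finite_PiE[OF fin, of "\<lambda>_. UNIV :: bool set"] finite_subset by auto
  moreover have "{\<omega>\<in>space M. P \<omega>} = (\<Union>f\<in>F. Q f)"
  proof
    show "{\<omega>\<in>space M. P \<omega>} \<subseteq> (\<Union>f\<in>F. Q f)" unfolding F_def Q_def by force
    show "(\<Union>f\<in>F. Q f) \<subseteq> {\<omega>\<in>space M. P \<omega>}"
    proof
      fix \<omega> assume "\<omega> \<in> (\<Union>f\<in>F. Q f)"
      then obtain \<omega>0 where "\<omega>0 \<in> space M" "P \<omega>0" "\<omega> \<in> Q (restrict (\<lambda>v. X v \<omega>0) V)"
        unfolding F_def by auto
      then show "\<omega> \<in> {\<omega>\<in>space M. P \<omega>}" using dep[of \<omega> \<omega>0] unfolding Q_def by auto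
    qed
  qed
  ultimately show ?thesis using Q_sets[of V] unfolding Q_def by (auto intro!: sets.finite_UN)
qed

definition words :: "nat \<Rightarrow> bool list set" where
  "words n = {w. length w = n}"

lemma finite_words [simp]: "finite (words n)"
  unfolding words_def by (rule finite_list_length)

lemma card_words: "card (words n) = 2 ^ n"
  using card_lists_length_eq[of "UNIV :: bool set" n] unfolding words_def by simp

lemma words_Suc: "words (Suc n) = (\<lambda>(w, b). w @ [b]) ` (words n \<times> UNIV)"
proof
  show "words (Suc n) \<subseteq> (\<lambda>(w, b). w @ [b]) ` (words n \<times> UNIV)"
  proof
    fix x assume "x \<in> words (Suc n)"
    then have "x = butlast x @ [last x]" "butlast x \<in> words n"
      unfolding words_def by (auto intro: append_butlast_last_id[symmetric])
    then show "x \<in> (\<lambda>(w, b). w @ [b]) ` (words n \<times> UNIV)"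
      by (intro image_eqI[where x="(butlast x, last x)"]) auto
  qed
qed (auto simp: words_def)

lemma sum_words_Suc:
  "(\<Sum>w\<in>words (Suc n). f w) = (\<Sum>w\<in>words n. f (w @ [False]) + f (w @ [True]))"
proof -
  have inj: "inj_on (\<lambda>(w, b). w @ [b]) (words n \<times> (UNIV :: bool set))"
    by (auto simp: inj_on_def)
  have "(\<Sum>w\<in>words (Suc n). f w) = (\<Sum>p\<in>words n \<times> (UNIV :: bool set). f (fst p @ [snd p]))"
    unfolding words_Suc by (subst sum.reindex[OF inj]) (auto intro!: sum.cong)
  also have "\<dots> = (\<Sum>w\<in>words n. \<Sum>b\<in>(UNIV :: bool set). f (w @ [b]))"
    by (simp add: sum.cartesian_product split_def)
  finally show ?thesis by (simp add: UNIV_bool add.commute)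
qed

lemma strict_desc_iff: "v \<in> strict_desc u \<longleftrightarrow> (\<exists>w. w \<noteq> [] \<and> v = u @ w)"
  unfolding strict_desc_def by auto

lemma not_strict_desc_if_shorter: "length v \<le> length u \<Longrightarrow> v \<notin> strict_desc u"
  unfolding strict_desc_iff by auto

lemma not_strict_desc_child:
  "length v = length u \<Longrightarrow> v \<noteq> u \<Longrightarrow> v @ [b] \<notin> strict_desc u"
  unfolding strict_desc_iff by (auto simp: append_eq_append_conv2 Cons_eq_append_conv)

definition child_alive :: "bool \<Rightarrow> (bool \<times> bool) set" where
  "child_alive c = {q. if c then snd q else fst q}"

text \<open>gamma_j is the expected number of children with value 1 of a node with value 1.\<close>
lemma gamma_eq:
  "gamma nu j = measure_pmf.prob (nu True j) (child_alive False)
     + measure_pmf.prob (nu True j) (child_alive True)"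
proof -
  have "child_alive False = {(True, True), (True, False)}"
    "child_alive True = {(True, True), (False, True)}" by (auto simp: child_alive_def)
  then show ?thesis unfolding gamma_def by (simp add: measure_measure_pmf_finite)
qed

lemma gamma_nonneg: "gamma nu j \<ge> 0"
  unfolding gamma_eq by simp

lemma gamma_le_2: "gamma nu j \<le> 2"
  unfolding gamma_eq
  using measure_pmf.prob_le_1[of "nu True j" "child_alive False"]
    measure_pmf.prob_le_1[of "nu True j" "child_alive True"] by linarith

text \<open>eta_j is the probability that a node with value 0 has a child with value 1.\<close>
lemma eta_eq: "eta nu j = measure_pmf.prob (nu False j) (UNIV - {(False, False)})"
  unfolding eta_def using measure_pmf.prob_compl[of "{(False, False)}" "nu False j"]
  by (simp add: measure_pmf_single)

lemma eta_nonneg: "eta nu j \<ge> 0"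
  unfolding eta_eq by simp

lemma eta_le_1: "eta nu j \<le> 1"
  unfolding eta_eq by simp

lemma prob_child_alive_le_eta: "measure_pmf.prob (nu False j) (child_alive c) \<le> eta nu j"
  unfolding eta_eq by (rule measure_pmf.finite_measure_mono) (auto simp: child_alive_def)

lemma prob_no_child_alive: "measure_pmf.prob (nu False j) {(False, False)} = 1 - eta nu j"
  unfolding eta_def by (simp add: measure_pmf_single)

lemma gamma_pos_from_jlow: "jlow nu = enat J \<Longrightarrow> j \<ge> J \<Longrightarrow> gamma nu j > 0"
proof -
  assume jl: "jlow nu = enat J" and j: "j \<ge> J"
  have ex: "\<exists>j0. \<forall>j\<ge>j0. gamma nu j > 0"
    using jl unfolding jlow_def by (metis enat_ord_simps(4) infinity_ne_i0 not_infinity_eq)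
  then have "J = (LEAST j0. \<forall>j\<ge>j0. gamma nu j > 0)" using jl unfolding jlow_def by simp
  then show ?thesis using j LeastI_ex[OF ex] by blast
qed

section \<open>Deterministic estimates\<close>

lemma eta_tail_not_summable:
  assumes div: "(\<Sum>j. ennreal (2 ^ j * eta nu j)) = \<top>"
  shows "\<not> summable (\<lambda>i. 2 ^ i * eta nu (d + i) :: real)"
proof
  assume "summable (\<lambda>i. 2 ^ i * eta nu (d + i) :: real)"
  then have "summable (\<lambda>i. 2 ^ d * (2 ^ i * eta nu (d + i)) :: real)" by (rule summable_mult)
  then have "summable (\<lambda>i. 2 ^ (i + d) * eta nu (i + d) :: real)"
    by (simp add: power_add mult_ac add.commute)
  then have "summable (\<lambda>j. 2 ^ j * eta nu j :: real)"
    by (rule summable_iff_shift[THEN iffD1])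
  then have "(\<Sum>j. ennreal (2 ^ j * eta nu j)) = ennreal (\<Sum>j. 2 ^ j * eta nu j)"
    by (intro suminf_ennreal2) (auto simp: eta_nonneg)
  then show False using div by simp
qed

text \<open>The probability that the first k generations below a node of depth d are all 0
  is bounded by this product; divergence of sum 2^j eta_j makes it arbitrarily small.\<close>
lemma prod_one_minus_eta_small:
  assumes div: "(\<Sum>j. ennreal (2 ^ j * eta nu j)) = \<top>" and e: "\<epsilon> > 0"
  shows "\<exists>k. (\<Prod>i<k. (1 - eta nu (d + i)) ^ (2 ^ i)) \<le> \<epsilon>"
proof -
  define a where "a i = 2 ^ i * eta nu (d + i)" for i
  have "\<not> (\<forall>n. (\<Sum>i<n. a i) \<le> - ln \<epsilon>)"
  proof
    assume "\<forall>n. (\<Sum>i<n. a i) \<le> - ln \<epsilon>"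
    then have "summable a" by (intro summableI_nonneg_bounded) (auto simp: a_def eta_nonneg)
    then show False using eta_tail_not_summable[OF div, of d] unfolding a_def by simp
  qed
  then obtain k where k: "(\<Sum>i<k. a i) > - ln \<epsilon>" by (auto simp: not_le)
  have "(\<Prod>i<k. (1 - eta nu (d + i)) ^ (2 ^ i)) \<le> (\<Prod>i<k. exp (- eta nu (d + i)) ^ (2 ^ i))"
  proof (rule prod_mono)
    fix i
    have "0 \<le> 1 - eta nu (d + i)" using eta_le_1 by simp
    moreover have "1 - eta nu (d + i) \<le> exp (- eta nu (d + i))"
      using exp_ge_add_one_self[of "- eta nu (d + i)"] by simp
    ultimately show "0 \<le> (1 - eta nu (d + i)) ^ 2 ^ i \<and>
        (1 - eta nu (d + i)) ^ 2 ^ i \<le> exp (- eta nu (d + i)) ^ 2 ^ i"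
      by (auto intro: power_mono)
  qed
  also have "\<dots> = exp (- (\<Sum>i<k. a i))"
    unfolding a_def by (simp add: exp_sum[symmetric] sum_negf exp_of_nat_mult[symmetric])
  also have "\<dots> \<le> exp (ln \<epsilon>)" using k by simp
  finally show ?thesis using e by auto
qed

lemma prod_gamma_change_start:
  assumes pos: "\<And>j. j \<ge> J \<Longrightarrow> gamma nu j > 0" and n: "n \<ge> J" "n \<ge> d"
  shows "(\<Prod>l\<in>{d..n}. gamma nu l) \<le> (2 ^ J + 1 / (\<Prod>l\<in>{J..<d}. gamma nu l)) * (\<Prod>l\<in>{J..n}. gamma nu l)"
proof -
  define P0 where "P0 = (\<Prod>l\<in>{J..<d}. gamma nu l)"
  define C where "C = 2 ^ J + 1 / P0"
  have P0_pos: "P0 > 0" unfolding P0_def using pos by (intro prod_pos) auto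
  have Q_nonneg: "(\<Prod>l\<in>{J..n}. gamma nu l) \<ge> 0" using gamma_nonneg by (intro prod_nonneg) auto
  have "(\<Prod>l\<in>{d..n}. gamma nu l) \<le> C * (\<Prod>l\<in>{J..n}. gamma nu l)"
  proof (cases "d \<le> J")
    case True
    then have "{d..n} = {d..<J} \<union> {J..n}" using n by auto
    then have "(\<Prod>l\<in>{d..n}. gamma nu l) = (\<Prod>l\<in>{d..<J}. gamma nu l) * (\<Prod>l\<in>{J..n}. gamma nu l)"
      by (simp add: prod.union_disjoint[symmetric] ivl_disj_int)
    also have "(\<Prod>l\<in>{d..<J}. gamma nu l) \<le> (\<Prod>l\<in>{d..<J}. 2)"
      using gamma_nonneg gamma_le_2 by (intro prod_mono) auto
    also have "(\<Prod>l\<in>{d..<J}. (2::real)) = 2 ^ (J - d)" by simp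
    also have "\<dots> \<le> 2 ^ J" by (intro power_increasing) auto
    also have "\<dots> \<le> C" unfolding C_def using P0_pos by simp
    finally show ?thesis using Q_nonneg by (simp add: mult_right_mono)
  next
    case False
    then have "{J..n} = {J..<d} \<union> {d..n}" using n by auto
    then have "(\<Prod>l\<in>{J..n}. gamma nu l) = P0 * (\<Prod>l\<in>{d..n}. gamma nu l)"
      unfolding P0_def by (simp add: prod.union_disjoint[symmetric] ivl_disj_int)
    then have "(\<Prod>l\<in>{d..n}. gamma nu l) = (1 / P0) * (\<Prod>l\<in>{J..n}. gamma nu l)"
      using P0_pos by simp
    also have "\<dots> \<le> C * (\<Prod>l\<in>{J..n}. gamma nu l)"
      unfolding C_def using Q_nonneg by (intro mult_right_mono) auto
    finally show ?thesis .
  qed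
  then show ?thesis unfolding C_def P0_def .
qed

lemma prod_shift_start:
  fixes f :: "nat \<Rightarrow> real"
  assumes "d \<le> n"
  shows "(\<Prod>i<Suc n - d. f (d + i)) = (\<Prod>l\<in>{d..n}. f l)"
proof -
  have "(\<Prod>l\<in>{d..<(Suc n - d) + d}. f l) = (\<Prod>i\<in>{0..<Suc n - d}. f (i + d))"
    using prod.shift_bounds_nat_ivl[of f 0 d "Suc n - d"] by simp
  moreover have "(Suc n - d) + d = Suc n" using assms by simp
  ultimately show ?thesis by (simp add: atLeast0LessThan atLeastLessThanSuc_atLeastAtMost add.commute)
qed

lemma prod_gamma_often_below:
  assumes th: "theta nu < ereal c" and jl: "jlow nu = enat J"
  shows "\<exists>c'<c. \<forall>N. \<exists>n\<ge>N. (\<Prod>l\<in>{J..n}. gamma nu l) \<le> 2 powr (c' * real n)"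
proof -
  note pos = gamma_pos_from_jlow[OF jl]
  define f where "f j = ereal ((\<Sum>l\<in>{J..j}. ln (gamma nu l)) / (real j * ln 2))" for j
  have "\<not> ereal c \<le> liminf f" using th unfolding theta_def jl f_def by simp
  then obtain y where y: "y < ereal c" "\<not> eventually (\<lambda>x. y < f x) sequentially"
    unfolding le_Liminf_iff by auto
  have "y \<noteq> -\<infinity>" using y(2) unfolding f_def by auto
  with y(1) obtain c' where c': "y = ereal c'" "c' < c" by (cases y) auto
  have "\<exists>n\<ge>N. (\<Prod>l\<in>{J..n}. gamma nu l) \<le> 2 powr (c' * real n)" for N
  proof -
    have "\<forall>N. \<exists>n\<ge>N. f n \<le> ereal c'"
      using y(2) c'(1) unfolding eventually_sequentially by (auto simp: not_less)
    then obtain n where n: "n \<ge> max N 1" "f n \<le> ereal c'" by blast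
    have log_bound: "(\<Sum>l\<in>{J..n}. ln (gamma nu l)) \<le> c' * (real n * ln 2)"
      using n unfolding f_def by (simp add: pos_divide_le_eq)
    have "(\<Prod>l\<in>{J..n}. gamma nu l) = exp (\<Sum>l\<in>{J..n}. ln (gamma nu l))"
      by (simp add: exp_sum pos)
    also have "\<dots> \<le> exp (c' * (real n * ln 2))" using log_bound by simp
    also have "\<dots> = 2 powr (c' * real n)" by (simp add: powr_def mult_ac)
    finally show ?thesis using n by auto
  qed
  then show ?thesis using c'(2) by blast
qed

lemma prod_gamma_small:
  assumes th: "theta nu < ereal c" and e: "\<epsilon> > 0"
  shows "\<exists>n. (\<Prod>i<n. gamma nu (d + i)) \<le> \<epsilon> * 2 powr (c * real n)"
proof (cases "\<exists>j0. \<forall>j\<ge>j0. gamma nu j > 0")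
  case False
  then obtain j where "j \<ge> d" "\<not> gamma nu j > 0" by auto
  then have j: "j \<ge> d" "gamma nu j = 0" using gamma_nonneg[of nu j] by auto
  then have "(\<Prod>i<Suc (j - d). gamma nu (d + i)) = 0"
    by (intro prod_zero) (auto intro!: bexI[of _ "j - d"])
  moreover have "0 \<le> \<epsilon> * 2 powr (c * real (Suc (j - d)))" using e by simp
  ultimately show ?thesis by metis
next
  case True
  define J where "J = (LEAST j0. \<forall>j\<ge>j0. gamma nu j > 0)"
  have jl: "jlow nu = enat J" unfolding jlow_def J_def using True by simp
  note pos = gamma_pos_from_jlow[OF jl]
  obtain c' where c': "c' < c" and often: "\<And>N. \<exists>n\<ge>N. (\<Prod>l\<in>{J..n}. gamma nu l) \<le> 2 powr (c' * real n)"
    using prod_gamma_often_below[OF th jl] by blast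
  define C where "C = 2 ^ J + 1 / (\<Prod>l\<in>{J..<d}. gamma nu l)"
  have "(\<Prod>l\<in>{J..<d}. gamma nu l) > 0" using pos by (intro prod_pos) auto
  then have C_pos: "C > 0" unfolding C_def by (simp add: add_pos_nonneg)
  define r where "r = 2 powr (c' - c)"
  have r: "0 < r" "r < 1" unfolding r_def using c' powr_less_mono[of "c' - c" 0 2] by auto
  define e' where "e' = \<epsilon> * 2 powr (c * (1 - real d)) / C"
  have "e' > 0" unfolding e'_def using e C_pos by simp
  moreover have "(\<lambda>n. r ^ n) \<longlonglongrightarrow> 0" using r by (intro LIMSEQ_realpow_zero) auto
  ultimately have "eventually (\<lambda>n. r ^ n < e') sequentially" by (simp add: order_tendstoD(2))
  then obtain N1 where N1: "\<And>n. n \<ge> N1 \<Longrightarrow> r ^ n < e'" unfolding eventually_sequentially by auto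
  obtain n where n: "n \<ge> max N1 (max J d)" and Q: "(\<Prod>l\<in>{J..n}. gamma nu l) \<le> 2 powr (c' * real n)"
    using often by blast
  then have nJ: "n \<ge> J" and nd: "n \<ge> d" and nN: "n \<ge> N1" by auto
  have "(\<Prod>i<Suc n - d. gamma nu (d + i)) = (\<Prod>l\<in>{d..n}. gamma nu l)" using nd by (rule prod_shift_start)
  also have "\<dots> \<le> C * (\<Prod>l\<in>{J..n}. gamma nu l)" unfolding C_def by (rule prod_gamma_change_start[OF pos nJ nd])
  also have "\<dots> \<le> C * 2 powr (c' * real n)" using Q C_pos by simp
  also have "\<dots> = C * r ^ n * 2 powr (c * real n)"
  proof -
    have "r ^ n = 2 powr ((c' - c) * real n)" unfolding r_def by (simp add: powr_realpow[symmetric] powr_powr)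
    then show ?thesis by (simp add: powr_add[symmetric] algebra_simps)
  qed
  also have "\<dots> \<le> C * e' * 2 powr (c * real n)" using N1[OF nN] C_pos by simp
  also have "\<dots> = \<epsilon> * 2 powr (c * real (Suc n - d))"
  proof -
    have "real (Suc n - d) = real n + (1 - real d)" using nd by simp
    then show ?thesis unfolding e'_def using C_pos by (simp add: powr_add distrib_left mult_ac)
  qed
  finally show ?thesis by blast
qed

lemma eta_subexponential:
  assumes ht: "htilde nu hl = \<infinity>" and hl: "hl > 0" and d: "\<delta> > 0"
  shows "eventually (\<lambda>k. 2 ^ k * eta nu k \<le> (2 powr \<delta>) ^ k) sequentially"
proof -
  define h where "h = hl / \<delta>"
  have h: "h > 0" and hh: "1 - hl / h = 1 - \<delta>" unfolding h_def using hl d by auto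
  have "(\<Sum>j. ennreal (2 powr ((1 - hl / h) * real j) * eta nu j)) \<noteq> \<top>"
  proof
    assume "(\<Sum>j. ennreal (2 powr ((1 - hl / h) * real j) * eta nu j)) = \<top>"
    then have "htilde nu hl \<le> ereal h" unfolding htilde_def using h by (intro Inf_lower) auto
    then show False using ht by simp
  qed
  then have "summable (\<lambda>j. 2 powr ((1 - \<delta>) * real j) * eta nu j)"
    unfolding hh by (intro summable_suminf_not_top) (auto simp: eta_nonneg)
  then have "(\<lambda>j. 2 powr ((1 - \<delta>) * real j) * eta nu j) \<longlonglongrightarrow> 0" by (rule summable_LIMSEQ_zero)
  then have "eventually (\<lambda>j. 2 powr ((1 - \<delta>) * real j) * eta nu j < 1) sequentially"
    by (rule order_tendstoD) simp
  then show ?thesis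
  proof eventually_elim
    case (elim k)
    have "2 ^ k * eta nu k = 2 powr (\<delta> * real k) * (2 powr ((1 - \<delta>) * real k) * eta nu k)"
      by (simp add: powr_realpow[symmetric] powr_add[symmetric] algebra_simps)
    also have "\<dots> \<le> 2 powr (\<delta> * real k) * 1" using elim by (intro mult_left_mono) auto
    also have "\<dots> = (2 powr \<delta>) ^ k" by (simp add: powr_realpow[symmetric] powr_powr mult.commute)
    finally show ?case .
  qed
qed

lemma prod_gamma_not_too_small:
  assumes th: "theta nu = ereal t" and t: "t \<ge> 0" and jl: "jlow nu = enat J" and d: "\<delta> > 0"
  shows "eventually (\<lambda>k. (\<Prod>l\<in>{J..<Suc k}. gamma nu l) * (2 powr \<delta>) ^ k \<ge> 1) sequentially"
proof -
  note pos = gamma_pos_from_jlow[OF jl]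
  define f where "f j = ereal ((\<Sum>l\<in>{J..j}. ln (gamma nu l)) / (real j * ln 2))" for j
  have "ereal (t - \<delta>) < liminf f" using th d unfolding theta_def jl f_def by simp
  then have "eventually (\<lambda>k. f k > ereal (t - \<delta>)) sequentially" by (rule less_LiminfD)
  moreover have "eventually (\<lambda>k. k \<ge> max J 1) sequentially" by (rule eventually_ge_at_top)
  ultimately show ?thesis
  proof eventually_elim
    case (elim k)
    then have k1: "k \<ge> 1" by auto
    have "(t - \<delta>) * (real k * ln 2) < (\<Sum>l\<in>{J..k}. ln (gamma nu l))"
      using elim k1 unfolding f_def by (simp add: pos_less_divide_eq)
    moreover have "- (\<delta> * (real k * ln 2)) \<le> (t - \<delta>) * (real k * ln 2)"
      using t by (simp add: algebra_simps)
    ultimately have S: "- (\<delta> * (real k * ln 2)) < (\<Sum>l\<in>{J..k}. ln (gamma nu l))" by linarith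
    have "1 / (2 powr \<delta>) ^ k = exp (- (\<delta> * (real k * ln 2)))"
      by (simp add: powr_realpow[symmetric] powr_powr powr_def exp_minus field_simps)
    also have "\<dots> \<le> exp (\<Sum>l\<in>{J..k}. ln (gamma nu l))" using S by simp
    also have "\<dots> = (\<Prod>l\<in>{J..<Suc k}. gamma nu l)"
      by (simp add: exp_sum pos atLeastLessThanSuc_atLeastAtMost)
    finally show ?case by (simp add: field_simps)
  qed
qed

lemma eventual_bound_to_uniform:
  fixes a T :: "nat \<Rightarrow> real"
  assumes T_nonneg: "\<And>j. 0 \<le> T j" and T_zero: "\<And>j. T j = 0 \<Longrightarrow> a j \<le> 0"
    and eventually: "\<And>j. j \<ge> N \<Longrightarrow> a j \<le> T j"
  shows "\<exists>\<kappa>\<ge>1. \<forall>j. a j \<le> \<kappa> * T j"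
proof -
  define \<kappa> where "\<kappa> = max 1 (\<Sum>j<N. \<bar>a j\<bar> / T j)"
  have \<kappa>1: "\<kappa> \<ge> 1" unfolding \<kappa>_def by simp
  have "a j \<le> \<kappa> * T j" for j
  proof (cases "j \<ge> N")
    case True
    have "a j \<le> T j" by (rule eventually[OF True])
    also have "\<dots> \<le> \<kappa> * T j" using \<kappa>1 T_nonneg[of j] by (simp add: mult_le_cancel_right1)
    finally show ?thesis .
  next
    case False
    show ?thesis
    proof (cases "T j = 0")
      case False
      then have T_pos: "T j > 0" using T_nonneg[of j] by simp
      have "\<bar>a j\<bar> / T j \<le> (\<Sum>j<N. \<bar>a j\<bar> / T j)"
        using \<open>\<not> j \<ge> N\<close> T_nonneg by (intro member_le_sum) auto
      also have "\<dots> \<le> \<kappa>" unfolding \<kappa>_def by simp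
      finally show ?thesis using T_pos by (simp add: divide_le_eq)
    qed (use T_zero in simp)
  qed
  then show ?thesis using \<kappa>1 by blast
qed

lemma recursive_growth_bound:
  fixes r :: "nat \<Rightarrow> real"
  assumes x: "x > 1" and step: "\<And>k. k \<ge> K \<Longrightarrow> r (Suc k) \<le> r k + 2 * x ^ k"
  shows "k \<ge> K \<Longrightarrow> r k \<le> r K + (2 / (x - 1)) * x ^ k"
proof -
  define B where "B = 2 / (x - 1)"
  have B: "B * x = B + 2" and B_nonneg: "B \<ge> 0" unfolding B_def using x by (auto simp: field_simps)
  have "r (K + m) \<le> r K + B * x ^ (K + m)" for m
  proof (induction m)
    case 0 then show ?case using B_nonneg x by simp
  next
    case (Suc m)
    have "r (K + Suc m) \<le> r (K + m) + 2 * x ^ (K + m)" using step[of "K + m"] by simp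
    also have "\<dots> \<le> r K + (B + 2) * x ^ (K + m)" using Suc by (simp add: algebra_simps)
    also have "\<dots> = r K + B * x ^ (K + Suc m)" unfolding B[symmetric] by (simp add: mult_ac)
    finally show ?case .
  qed
  then show "k \<ge> K \<Longrightarrow> r k \<le> r K + (2 / (x - 1)) * x ^ k" unfolding B_def
    by (metis le_add_diff_inverse)
qed

context prob_space
begin

lemma null_set_if_prob_zero: "A \<in> events \<Longrightarrow> prob A = 0 \<Longrightarrow> A \<in> null_sets M"
  by (simp add: null_setsI emeasure_eq_measure)

lemma null_set_if_arbitrarily_small:
  assumes A: "A \<in> events" and small: "\<And>\<epsilon>. \<epsilon> > 0 \<Longrightarrow> prob A \<le> \<epsilon>"
  shows "A \<in> null_sets M"
proof (rule null_set_if_prob_zero[OF A])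
  have "\<not> prob A > 0"
  proof
    assume "prob A > 0"
    then show False using small[of "prob A / 2"] by simp
  qed
  then show "prob A = 0" using measure_nonneg[of M A] by linarith
qed

lemma markov_count:
  assumes V: "finite V" and E: "\<And>v. v \<in> V \<Longrightarrow> E v \<in> events" and c: "c > 0"
  shows "prob {\<omega>\<in>space M. c \<le> real (card {v\<in>V. \<omega> \<in> E v})} \<le> (\<Sum>v\<in>V. prob (E v)) / c"
proof -
  define f where "f \<omega> = (\<Sum>v\<in>V. indicator (E v) \<omega> :: real)" for \<omega>
  have int: "integrable M f" unfolding f_def
    using E by (auto simp: integrable_indicator_iff less_top[symmetric])
  have "(\<integral>\<omega>. f \<omega> \<partial>M) = (\<Sum>v\<in>V. prob (E v))" unfolding f_def
    using E by (subst Bochner_Integration.integral_sum)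
      (auto simp: integrable_indicator_iff less_top[symmetric])
  moreover have "prob {\<omega>\<in>space M. c \<le> f \<omega>} \<le> (\<integral>\<omega>. f \<omega> \<partial>M) / c"
    by (rule integral_Markov_inequality_measure[OF int sets.top]) (auto simp: f_def c sum_nonneg)
  moreover have "real (card {v\<in>V. \<omega> \<in> E v}) = f \<omega>" for \<omega>
    unfolding f_def using V by (simp add: indicator_def sum.inter_filter[symmetric] Int_def)
  ultimately show ?thesis by simp
qed

lemma AE_uniform_bound_Borel_Cantelli:
  fixes f :: "nat \<Rightarrow> 'a \<Rightarrow> real" and T :: "nat \<Rightarrow> real"
  assumes meas: "\<And>j. {\<omega>\<in>space M. T j < f j \<omega>} \<in> events"
    and summ: "summable (\<lambda>j. prob {\<omega>\<in>space M. T j < f j \<omega>})"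
    and T_nonneg: "\<And>j. 0 \<le> T j"
    and T_zero: "\<And>j. T j = 0 \<Longrightarrow> prob {\<omega>\<in>space M. T j < f j \<omega>} = 0"
  shows "AE \<omega> in M. \<exists>\<kappa>\<ge>1. \<forall>j. f j \<omega> \<le> \<kappa> * T j"
proof -
  let ?B = "\<lambda>j. {\<omega>\<in>space M. T j < f j \<omega>}"
  have eventually_good: "AE \<omega> in M. eventually (\<lambda>j. \<omega> \<in> space M - ?B j) sequentially"
    by (rule borel_cantelli_AE1[OF meas _ summ]) (simp add: less_top[symmetric])
  have good_where_T_zero: "AE \<omega> in M. \<forall>j. T j = 0 \<longrightarrow> \<omega> \<notin> ?B j"
  proof (subst AE_all_countable, intro allI)
    fix j
    show "AE \<omega> in M. T j = 0 \<longrightarrow> \<omega> \<notin> ?B j"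
    proof (cases "T j = 0")
      case True
      then have "?B j \<in> null_sets M" by (intro null_set_if_prob_zero meas T_zero)
      then show ?thesis by (rule AE_I') auto
    qed simp
  qed
  from eventually_good good_where_T_zero show ?thesis
  proof eventually_elim
    case (elim \<omega>)
    then obtain N where N: "\<And>j. j \<ge> N \<Longrightarrow> \<omega> \<in> space M - ?B j"
      unfolding eventually_sequentially by auto
    show ?case
    proof (rule eventual_bound_to_uniform[OF T_nonneg])
      show "f j \<omega> \<le> 0" if "T j = 0" for j using that elim(2) N[of N] by auto
      show "f j \<omega> \<le> T j" if "j \<ge> N" for j using N[OF that] by auto
    qed
  qed
qed

end

section \<open>The branching process\<close>

locale branching =
  fixes M :: "'a measure" and nu :: "bool \<Rightarrow> nat \<Rightarrow> (bool \<times> bool) pmf"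
    and X :: "bool list \<Rightarrow> 'a \<Rightarrow> bool"
  assumes branching: "branching_process M nu X"
begin

sublocale prob_space M
  using branching unfolding branching_process_def by auto

abbreviation G :: "bool list \<Rightarrow> 'a measure" where
  "G u \<equiv> G_alg M X u"

lemma space_G: "space (G u) = space M"
  unfolding G_alg_def by (simp add: space_measure_of_conv)

lemma sets_G: "sets (G u) = sigma_sets (space M) {X v -` B \<inter> space M | v B. v \<notin> strict_desc u}"
  unfolding G_alg_def by (rule sets_measure_of) auto

lemma sets_G_subset: "sets (G u) \<subseteq> events"
proof -
  have "X v -` B \<inter> space M \<in> events" for v B
    using branching unfolding branching_process_def by (auto intro: measurable_sets)
  then show ?thesis unfolding sets_G by (intro sets.sigma_sets_subset) auto
qed

lemma X_event_G: "v \<notin> strict_desc u \<Longrightarrow> {\<omega>\<in>space M. X v \<omega>} \<in> sets (G u)"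
proof -
  assume "v \<notin> strict_desc u"
  then have "X v -` {True} \<inter> space M \<in> sets (G u)"
    unfolding sets_G by (intro sigma_sets.Basic) blast
  moreover have "X v -` {True} \<inter> space M = {\<omega>\<in>space M. X v \<omega>}" by auto
  ultimately show ?thesis by simp
qed

lemma X_event: "{\<omega>\<in>space M. X v \<omega>} \<in> events"
  using X_event_G[of v v] sets_G_subset by (auto simp: strict_desc_iff)

lemma event_M:
  assumes "finite V"
    and "\<And>\<omega> \<omega>'. \<omega> \<in> space M \<Longrightarrow> \<omega>' \<in> space M \<Longrightarrow> (\<forall>v\<in>V. X v \<omega> = X v \<omega>') \<Longrightarrow> P \<omega> = P \<omega>'"
  shows "{\<omega>\<in>space M. P \<omega>} \<in> events"
  by (rule finitely_determined_event[OF assms(1) refl X_event assms(2)])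

lemma event_G:
  assumes "finite V" "\<And>v. v \<in> V \<Longrightarrow> v \<notin> strict_desc u"
    and "\<And>\<omega> \<omega>'. \<omega> \<in> space M \<Longrightarrow> \<omega>' \<in> space M \<Longrightarrow> (\<forall>v\<in>V. X v \<omega> = X v \<omega>') \<Longrightarrow> P \<omega> = P \<omega>'"
  shows "{\<omega>\<in>space M. P \<omega>} \<in> sets (G u)"
  by (rule finitely_determined_event[OF assms(1) space_G X_event_G[OF assms(2)] assms(3)])

lemma prob_children_factor:
  assumes E: "E \<in> sets (G u)" and X_u: "\<And>\<omega>. \<omega> \<in> E \<Longrightarrow> X u \<omega> = b"
  shows "prob (E \<inter> {\<omega>\<in>space M. (X (u @ [False]) \<omega>, X (u @ [True]) \<omega>) \<in> A})
     = prob E * measure_pmf.prob (nu b (length u)) A"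
proof -
  define C where "C = {\<omega>\<in>space M. (X (u @ [False]) \<omega>, X (u @ [True]) \<omega>) \<in> A}"
  have C: "C \<in> events" unfolding C_def by (rule event_M[of "{u @ [False], u @ [True]}"]) auto
  have E_M: "E \<in> events" using E sets_G_subset by auto
  interpret sub: finite_measure_subalgebra M "G u"
    by unfold_locales (auto simp: subalgebra_def space_G sets_G_subset)
  have int: "integrable M (indicator C :: 'a \<Rightarrow> real)"
    using C by (simp add: integrable_indicator_iff less_top[symmetric])
  have ae: "AE \<omega> in M. real_cond_exp M (G u) (indicator C) \<omega> = measure_pmf.prob (nu (X u \<omega>) (length u)) A"
    using branching unfolding branching_process_def C_def by auto
  have "prob (E \<inter> C) = (LINT \<omega>:E|M. indicator C \<omega>)"
    using E_M C by (simp add: set_lebesgue_integral_def indicator_inter_arith[symmetric] mult.commute Int_commute)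
  also have "\<dots> = (LINT \<omega>:E|M. real_cond_exp M (G u) (indicator C) \<omega>)"
    by (rule sub.real_cond_exp_intA[OF int E])
  also have "\<dots> = (LINT \<omega>:E|M. measure_pmf.prob (nu b (length u)) A)"
    using E_M by (intro set_lebesgue_integral_cong_AE) (use ae X_u in \<open>auto elim!: AE_mp\<close>)
  also have "\<dots> = prob E * measure_pmf.prob (nu b (length u)) A"
    using E_M by (simp add: set_integral_const)
  finally show ?thesis unfolding C_def .
qed

lemma prob_child_factor:
  assumes "E \<in> sets (G u)" and "\<And>\<omega>. \<omega> \<in> E \<Longrightarrow> X u \<omega> = b"
  shows "prob (E \<inter> {\<omega>\<in>space M. X (u @ [c]) \<omega>})
     = prob E * measure_pmf.prob (nu b (length u)) (child_alive c)"
proof -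
  have "{\<omega>\<in>space M. X (u @ [c]) \<omega>} =
      {\<omega>\<in>space M. (X (u @ [False]) \<omega>, X (u @ [True]) \<omega>) \<in> child_alive c}"
    by (cases c) (auto simp: child_alive_def)
  then show ?thesis using prob_children_factor[OF assms] by simp
qed

definition ones_path :: "bool list \<Rightarrow> bool list \<Rightarrow> 'a set" where
  "ones_path u w = {\<omega>\<in>space M. \<forall>i\<le>length w. X (u @ take i w) \<omega>}"

text \<open>A path of ones ending at u @ w is determined by nodes not below u @ w, so the
  branching property applies to it at u @ w.\<close>
lemma ones_path_G: "ones_path u w \<in> sets (G (u @ w))"
  unfolding ones_path_def
  by (rule event_G[where V="(\<lambda>i. u @ take i w) ` {..length w}"]) (auto intro!: not_strict_desc_if_shorter)

lemma ones_path_event: "ones_path u w \<in> events"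
  using ones_path_G sets_G_subset by blast

lemma ones_path_snoc: "ones_path u (w @ [c]) = ones_path u w \<inter> {\<omega>\<in>space M. X (u @ w @ [c]) \<omega>}"
proof -
  have "(\<forall>i\<le>length (w @ [c]). X (u @ take i (w @ [c])) \<omega>) \<longleftrightarrow>
      (\<forall>i\<le>length w. X (u @ take i w) \<omega>) \<and> X (u @ w @ [c]) \<omega>" for \<omega>
  proof -
    have "i \<le> length (w @ [c]) \<longleftrightarrow> i \<le> length w \<or> i = Suc (length w)" for i by auto
    then show ?thesis by auto
  qed
  then show ?thesis unfolding ones_path_def by auto
qed

lemma ones_path_last: "\<omega> \<in> ones_path u w \<Longrightarrow> X (u @ w) \<omega>"
  unfolding ones_path_def by auto

lemma expected_ones_paths_le:
  "(\<Sum>w\<in>words n. prob (ones_path u w)) \<le> (\<Prod>i<n. gamma nu (length u + i))"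
proof (induction n)
  case 0
  have "words 0 = {[]}" unfolding words_def by auto
  then show ?case by simp
next
  case (Suc n)
  have "prob (ones_path u (w @ [c])) =
      prob (ones_path u w) * measure_pmf.prob (nu True (length u + n)) (child_alive c)"
    if "w \<in> words n" for w c
  proof -
    have "prob (ones_path u w \<inter> {\<omega>\<in>space M. X ((u @ w) @ [c]) \<omega>}) =
        prob (ones_path u w) * measure_pmf.prob (nu True (length (u @ w))) (child_alive c)"
      by (rule prob_child_factor[OF ones_path_G]) (simp add: ones_path_last)
    then show ?thesis using that unfolding ones_path_snoc by (simp add: words_def)
  qed
  then have "(\<Sum>w\<in>words (Suc n). prob (ones_path u w)) =
      gamma nu (length u + n) * (\<Sum>w\<in>words n. prob (ones_path u w))"
    unfolding sum_words_Suc gamma_eq by (simp add: sum_distrib_left algebra_simps sum.distrib)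
  then show ?case using Suc gamma_nonneg by (simp add: mult_left_mono mult.commute)
qed

definition all_zero :: "bool list set \<Rightarrow> 'a set" where
  "all_zero V = {\<omega>\<in>space M. \<forall>x\<in>V. \<not> X x \<omega>}"

lemma all_zero_G: "finite V \<Longrightarrow> (\<And>v. v \<in> V \<Longrightarrow> v \<notin> strict_desc u) \<Longrightarrow> all_zero V \<in> sets (G u)"
  unfolding all_zero_def by (rule event_G) auto

lemma all_zero_event: "finite V \<Longrightarrow> all_zero V \<in> events"
  unfolding all_zero_def by (rule event_M) auto

definition zero_nodes :: "bool list \<Rightarrow> nat \<Rightarrow> bool list set \<Rightarrow> bool list set" where
  "zero_nodes v k S = {v @ w | w. length w \<le> k} \<union> {v @ w @ [b] | w b. w \<in> S}"

lemma finite_zero_nodes: "finite S \<Longrightarrow> finite (zero_nodes v k S)"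
proof -
  assume S: "finite S"
  have "zero_nodes v k S = (\<lambda>w. v @ w) ` {w. length w \<le> k} \<union> (\<lambda>(w, b). v @ w @ [b]) ` (S \<times> UNIV)"
    unfolding zero_nodes_def by auto
  then show ?thesis using S finite_lists_length_le[of "UNIV :: bool set" k] by simp
qed

lemma zero_nodes_Suc: "zero_nodes v (Suc k) {} = zero_nodes v k (words k)"
proof -
  have "v @ w' \<in> zero_nodes v k (words k)" if len: "length w' = Suc k" for w'
  proof -
    obtain w'' b where "w' = w'' @ [b]" "length w'' = k" using len by (cases w' rule: rev_cases) auto
    then show ?thesis unfolding zero_nodes_def words_def by auto
  qed
  then show ?thesis unfolding zero_nodes_def words_def by (auto simp: le_Suc_eq)
qed

lemma prob_zero_nodes:
  assumes "finite S" "S \<subseteq> words k"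
  shows "prob (all_zero (zero_nodes v k S)) = prob (all_zero (zero_nodes v k {})) * (1 - eta nu (length v + k)) ^ card S"
  using assms
proof (induction S rule: finite_induct)
  case (insert w S)
  then have w: "length w = k" "w \<notin> S" "S \<subseteq> words k" by (auto simp: words_def)
  have G: "all_zero (zero_nodes v k S) \<in> sets (G (v @ w))"
  proof (rule all_zero_G)
    show "finite (zero_nodes v k S)" using insert by (simp add: finite_zero_nodes)
    fix x assume "x \<in> zero_nodes v k S"
    then consider w' where "x = v @ w'" "length w' \<le> k"
      | w' b where "x = (v @ w') @ [b]" "w' \<in> S"
      unfolding zero_nodes_def by auto
    then show "x \<notin> strict_desc (v @ w)"
    proof cases
      case 1
      then show ?thesis using w by (intro not_strict_desc_if_shorter) auto
    next
      case 2
      then show ?thesis unfolding 2(1) using w by (intro not_strict_desc_child) (auto simp: words_def subset_iff)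
    qed
  qed
  have eq: "all_zero (zero_nodes v k (insert w S)) = all_zero (zero_nodes v k S) \<inter>
      {\<omega>\<in>space M. (X ((v @ w) @ [False]) \<omega>, X ((v @ w) @ [True]) \<omega>) \<in> {(False, False)}}"
    unfolding all_zero_def zero_nodes_def by (auto simp: ex_bool_eq)
  have "X (v @ w) \<omega> = False" if "\<omega> \<in> all_zero (zero_nodes v k S)" for \<omega>
    using that w unfolding all_zero_def zero_nodes_def by auto
  then have "prob (all_zero (zero_nodes v k (insert w S))) =
      prob (all_zero (zero_nodes v k S)) * measure_pmf.prob (nu False (length (v @ w))) {(False, False)}"
    unfolding eq by (rule prob_children_factor[OF G])
  then have "prob (all_zero (zero_nodes v k (insert w S))) =
      prob (all_zero (zero_nodes v k S)) * (1 - eta nu (length v + k))"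
    unfolding prob_no_child_alive using w by simp
  then show ?case using insert w by simp
qed simp

lemma prob_zero_generations_le:
  "prob (all_zero (zero_nodes v k {})) \<le> (\<Prod>i<k. (1 - eta nu (length v + i)) ^ (2 ^ i))"
proof (induction k)
  case (Suc k)
  have "prob (all_zero (zero_nodes v (Suc k) {})) =
      prob (all_zero (zero_nodes v k {})) * (1 - eta nu (length v + k)) ^ (2 ^ k)"
    unfolding zero_nodes_Suc prob_zero_nodes[OF finite_words subset_refl] card_words ..
  also have "\<dots> \<le> (\<Prod>i<k. (1 - eta nu (length v + i)) ^ (2 ^ i)) * (1 - eta nu (length v + k)) ^ (2 ^ k)"
    using Suc eta_le_1 by (intro mult_right_mono) auto
  finally show ?case by simp
qed simp

definition expected_S :: "nat \<Rightarrow> real" where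
  "expected_S j = (\<Sum>v\<in>words j. prob {\<omega>\<in>space M. X v \<omega>})"

definition newborn :: "bool list \<Rightarrow> 'a set" where
  "newborn v = {\<omega>\<in>space M. v \<noteq> [] \<and> X v \<omega> \<and> \<not> X (butlast v) \<omega>}"

definition expected_Stilde :: "nat \<Rightarrow> real" where
  "expected_Stilde j = (\<Sum>v\<in>words j. prob (newborn v))"

lemma newborn_event: "newborn v \<in> events"
  unfolding newborn_def by (rule event_M[where V="{v, butlast v}"]) auto

lemma prob_newborn: "prob (newborn (w @ [c])) \<le> eta nu (length w)"
proof -
  have G: "{\<omega>\<in>space M. \<not> X w \<omega>} \<in> sets (G w)"
    by (rule event_G[where V="{w}"]) (auto simp: strict_desc_iff)
  have "newborn (w @ [c]) = {\<omega>\<in>space M. \<not> X w \<omega>} \<inter> {\<omega>\<in>space M. X (w @ [c]) \<omega>}"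
    unfolding newborn_def by auto
  then have "prob (newborn (w @ [c])) =
      prob {\<omega>\<in>space M. \<not> X w \<omega>} * measure_pmf.prob (nu False (length w)) (child_alive c)"
    using prob_child_factor[OF G, of False c] by simp
  also have "\<dots> \<le> 1 * eta nu (length w)"
    using prob_child_alive_le_eta by (intro mult_mono) auto
  finally show ?thesis by simp
qed

lemma expected_Stilde_Suc: "expected_Stilde (Suc n) \<le> 2 ^ Suc n * eta nu n"
proof -
  have "expected_Stilde (Suc n) = (\<Sum>w\<in>words n. prob (newborn (w @ [False])) + prob (newborn (w @ [True])))"
    unfolding expected_Stilde_def sum_words_Suc ..
  also have "\<dots> \<le> (\<Sum>w\<in>words n. 2 * eta nu n)"
  proof (rule sum_mono)
    fix w assume "w \<in> words n"
    then show "prob (newborn (w @ [False])) + prob (newborn (w @ [True])) \<le> 2 * eta nu n"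
      using prob_newborn[of w False] prob_newborn[of w True] by (simp add: words_def)
  qed
  also have "\<dots> = 2 ^ Suc n * eta nu n" by (simp add: card_words)
  finally show ?thesis .
qed

text \<open>A child is 1 either because its parent is 1, or because it is newborn.\<close>
lemma prob_X_child:
  "prob {\<omega>\<in>space M. X (w @ [c]) \<omega>} \<le>
    prob {\<omega>\<in>space M. X w \<omega>} * measure_pmf.prob (nu True (length w)) (child_alive c) + eta nu (length w)"
proof -
  let ?parent = "{\<omega>\<in>space M. X w \<omega>}" and ?child = "{\<omega>\<in>space M. X (w @ [c]) \<omega>}"
  have "?child \<subseteq> (?parent \<inter> ?child) \<union> newborn (w @ [c])"
    unfolding newborn_def by auto
  then have "prob ?child \<le> prob ((?parent \<inter> ?child) \<union> newborn (w @ [c]))"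
    by (intro finite_measure_mono) (auto intro: X_event newborn_event)
  also have "\<dots> \<le> prob (?parent \<inter> ?child) + prob (newborn (w @ [c]))"
    by (intro measure_subadditive) (auto intro: X_event newborn_event)
  also have "prob (?parent \<inter> ?child) = prob ?parent * measure_pmf.prob (nu True (length w)) (child_alive c)"
    by (rule prob_child_factor) (auto intro: X_event_G simp: strict_desc_iff)
  finally show ?thesis using prob_newborn[of w c] by simp
qed

lemma expected_S_Suc: "expected_S (Suc n) \<le> gamma nu n * expected_S n + 2 ^ Suc n * eta nu n"
proof -
  have "expected_S (Suc n) = (\<Sum>w\<in>words n. prob {\<omega>\<in>space M. X (w @ [False]) \<omega>} + prob {\<omega>\<in>space M. X (w @ [True]) \<omega>})"
    unfolding expected_S_def sum_words_Suc ..
  also have "\<dots> \<le> (\<Sum>w\<in>words n. gamma nu n * prob {\<omega>\<in>space M. X w \<omega>} + 2 * eta nu n)"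
  proof (rule sum_mono)
    fix w assume "w \<in> words n"
    then have n: "length w = n" by (simp add: words_def)
    show "prob {\<omega>\<in>space M. X (w @ [False]) \<omega>} + prob {\<omega>\<in>space M. X (w @ [True]) \<omega>}
      \<le> gamma nu n * prob {\<omega>\<in>space M. X w \<omega>} + 2 * eta nu n"
      using prob_X_child[of w False] prob_X_child[of w True] unfolding gamma_eq n
      by (simp add: algebra_simps)
  qed
  also have "\<dots> = gamma nu n * expected_S n + 2 ^ Suc n * eta nu n"
    by (simp add: expected_S_def sum.distrib sum_distrib_left card_words)
  finally show ?thesis .
qed

lemma S_set_words: "S_set X \<omega> j = {v\<in>words j. X v \<omega>}"
  unfolding S_set_def words_def by auto

lemma Stilde_j_newborn: "\<omega> \<in> space M \<Longrightarrow> Stilde_j X \<omega> j = {v\<in>words j. \<omega> \<in> newborn v}"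
  unfolding Stilde_j_def Stilde_def newborn_def words_def by auto

lemma S_count_event: "{\<omega>\<in>space M. Q (card (S_set X \<omega> j))} \<in> events"
proof (rule event_M[where V="words j"])
  fix \<omega> \<omega>' assume "\<forall>v\<in>words j. X v \<omega> = X v \<omega>'"
  then have "{v\<in>words j. X v \<omega>} = {v\<in>words j. X v \<omega>'}" by auto
  then show "Q (card (S_set X \<omega> j)) = Q (card (S_set X \<omega>' j))" unfolding S_set_words by simp
qed simp

lemma Stilde_count_event: "{\<omega>\<in>space M. Q (card (Stilde_j X \<omega> j))} \<in> events"
proof (rule event_M[where V="words j \<union> butlast ` words j"])
  fix \<omega> \<omega>' assume sp: "\<omega> \<in> space M" "\<omega>' \<in> space M"
    and agree: "\<forall>v\<in>words j \<union> butlast ` words j. X v \<omega> = X v \<omega>'"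
  have "{v\<in>words j. \<omega> \<in> newborn v} = {v\<in>words j. \<omega>' \<in> newborn v}"
    using sp agree unfolding newborn_def by auto
  then show "Q (card (Stilde_j X \<omega> j)) = Q (card (Stilde_j X \<omega>' j))"
    unfolding Stilde_j_newborn[OF sp(1)] Stilde_j_newborn[OF sp(2)] by simp
qed simp

lemma prob_S_count_ge:
  assumes "c > 0"
  shows "prob {\<omega>\<in>space M. c \<le> real (card (S_set X \<omega> j))} \<le> expected_S j / c"
proof -
  have "{\<omega>\<in>space M. c \<le> real (card (S_set X \<omega> j))} =
      {\<omega>\<in>space M. c \<le> real (card {v\<in>words j. \<omega> \<in> {\<omega>\<in>space M. X v \<omega>}})}"
    unfolding S_set_words by auto
  then show ?thesis unfolding expected_S_def using markov_count[OF finite_words X_event assms] by simp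
qed

lemma prob_Stilde_count_ge:
  assumes "c > 0"
  shows "prob {\<omega>\<in>space M. c \<le> real (card (Stilde_j X \<omega> j))} \<le> expected_Stilde j / c"
proof -
  have "{\<omega>\<in>space M. c \<le> real (card (Stilde_j X \<omega> j))} =
      {\<omega>\<in>space M. c \<le> real (card {v\<in>words j. \<omega> \<in> newborn v})}"
    using Stilde_j_newborn by auto
  then show ?thesis unfolding expected_Stilde_def using markov_count[OF finite_words newborn_event assms] by simp
qed

subsection \<open>Every subtree contains a point of Stilde\<close>

text \<open>If no node strictly below u is newborn, then either all nodes below u are 1, or some
  whole subtree below u is 0: below the first 0, no 1 can ever appear again.\<close>
lemma no_newborn_below:
  assumes none: "\<And>w. w \<noteq> [] \<Longrightarrow> u @ w \<notin> Stilde X \<omega>"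
  shows "(\<forall>w. X (u @ w) \<omega>) \<or> (\<exists>w. \<forall>w'. \<not> X (u @ w @ w') \<omega>)"
proof (cases "\<forall>w. X (u @ w) \<omega>")
  case False
  then obtain w where w: "\<not> X (u @ w) \<omega>" by auto
  have "\<not> X (u @ w @ w') \<omega>" for w'
  proof (induction w' rule: rev_induct)
    case (snoc b w')
    then show ?case using none[of "w @ w' @ [b]"] unfolding Stilde_def by (auto simp: butlast_append)
  qed (use w in simp)
  then show ?thesis by blast
qed simp

lemma zero_subtree_null:
  assumes div: "(\<Sum>j. ennreal (2 ^ j * eta nu j)) = \<top>"
  shows "{\<omega>\<in>space M. \<forall>w. \<not> X (v @ w) \<omega>} \<in> null_sets M"
proof -
  have eq: "{\<omega>\<in>space M. \<forall>w. \<not> X (v @ w) \<omega>} = (\<Inter>k. all_zero (zero_nodes v k {}))"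
  proof (intro equalityI subsetI)
    fix \<omega> assume "\<omega> \<in> (\<Inter>k. all_zero (zero_nodes v k {}))"
    then have "\<omega> \<in> all_zero (zero_nodes v (length w) {})" for w by blast
    then show "\<omega> \<in> {\<omega>\<in>space M. \<forall>w. \<not> X (v @ w) \<omega>}" unfolding all_zero_def zero_nodes_def by blast
  qed (auto simp: all_zero_def zero_nodes_def)
  show ?thesis unfolding eq
  proof (rule null_set_if_arbitrarily_small)
    have "all_zero (zero_nodes v k {}) \<in> events" for k
      by (simp add: all_zero_event finite_zero_nodes)
    then show "(\<Inter>k. all_zero (zero_nodes v k {})) \<in> events" by auto
    fix \<epsilon> :: real assume "\<epsilon> > 0"
    then obtain k where k: "(\<Prod>i<k. (1 - eta nu (length v + i)) ^ (2 ^ i)) \<le> \<epsilon>"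
      using prod_one_minus_eta_small[OF div] by blast
    have "prob (\<Inter>k. all_zero (zero_nodes v k {})) \<le> prob (all_zero (zero_nodes v k {}))"
        by (intro finite_measure_mono) (auto simp: all_zero_event finite_zero_nodes)
    also have "\<dots> \<le> \<epsilon>" using prob_zero_generations_le[of v k] k by linarith
    finally show "prob (\<Inter>k. all_zero (zero_nodes v k {})) \<le> \<epsilon>" .
  qed
qed

text \<open>Being all 1 below u forces all 2^n paths of length n to be paths of ones, whose
  expected number is a product of gammas; theta < 1 makes this impossible.\<close>
lemma full_subtree_null:
  assumes th: "theta nu < 1"
  shows "{\<omega>\<in>space M. \<forall>w. X (u @ w) \<omega>} \<in> null_sets M"
proof (rule null_set_if_arbitrarily_small)
  let ?F = "{\<omega>\<in>space M. \<forall>w. X (u @ w) \<omega>}"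
  have "?F = (\<Inter>w. {\<omega>\<in>space M. X (u @ w) \<omega>})" by auto
  moreover have "{\<omega>\<in>space M. X (u @ w) \<omega>} \<in> events" for w by (rule X_event)
  ultimately show "?F \<in> events" by auto
  fix \<epsilon> :: real assume "\<epsilon> > 0"
  then obtain n where n: "(\<Prod>i<n. gamma nu (length u + i)) \<le> \<epsilon> * 2 powr (1 * real n)"
    using prod_gamma_small[of nu 1 \<epsilon> "length u"] th by (auto simp: one_ereal_def)
  have "2 ^ n * prob ?F = (\<Sum>w\<in>words n. prob ?F)" by (simp add: card_words)
  also have "\<dots> \<le> (\<Sum>w\<in>words n. prob (ones_path u w))"
  proof (intro sum_mono finite_measure_mono[OF _ ones_path_event])
    show "?F \<subseteq> ones_path u w" for w unfolding ones_path_def by auto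
  qed
  also have "\<dots> \<le> \<epsilon> * 2 ^ n" using expected_ones_paths_le[where n=n and u=u] n by (simp add: powr_realpow)
  finally show "prob ?F \<le> \<epsilon>" by simp
qed

lemma AE_Stilde_below_every_node:
  assumes div: "(\<Sum>j. ennreal (2 ^ j * eta nu j)) = \<top>" and th: "theta nu < 1"
  shows "AE \<omega> in M. \<forall>u. \<exists>w. w \<noteq> [] \<and> u @ w \<in> Stilde X \<omega>"
proof -
  have "AE \<omega> in M. \<exists>w. w \<noteq> [] \<and> u @ w \<in> Stilde X \<omega>" for u
  proof (rule AE_I')
    have "{\<omega>\<in>space M. \<forall>w'. \<not> X (u @ w @ w') \<omega>} \<in> null_sets M" for w
      using zero_subtree_null[OF div, of "u @ w"] by simp
    then show "{\<omega>\<in>space M. \<forall>w. X (u @ w) \<omega>} \<union> (\<Union>w. {\<omega>\<in>space M. \<forall>w'. \<not> X (u @ w @ w') \<omega>}) \<in> null_sets M"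
      using full_subtree_null[OF th] by (intro null_sets.Un null_sets_UN)
  qed (use no_newborn_below[of u] in fastforce)
  then show ?thesis by (subst AE_all_countable) auto
qed

subsection \<open>No infinite paths when theta < 0\<close>

definition long_ones_paths :: "bool list \<Rightarrow> 'a set" where
  "long_ones_paths u = (\<Inter>n. \<Union>w\<in>words n. ones_path u w)"

text \<open>If theta < 0 the expected number of paths of ones of length n tends to 0 along
  a subsequence.\<close>
lemma long_ones_paths_null:
  assumes th: "theta nu < 0"
  shows "long_ones_paths u \<in> null_sets M"
proof (rule null_set_if_arbitrarily_small)
  show "long_ones_paths u \<in> events"
    unfolding long_ones_paths_def by (auto intro!: sets.countable_INT sets.finite_UN ones_path_event)
  fix \<epsilon> :: real assume "\<epsilon> > 0"
  then obtain n where n: "(\<Prod>i<n. gamma nu (length u + i)) \<le> \<epsilon> * 2 powr (0 * real n)"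
    using prod_gamma_small[of nu 0 \<epsilon> "length u"] th by (auto simp: zero_ereal_def)
  have "prob (long_ones_paths u) \<le> prob (\<Union>w\<in>words n. ones_path u w)"
    by (rule finite_measure_mono) (auto simp: long_ones_paths_def intro!: sets.finite_UN ones_path_event)
  also have "\<dots> \<le> (\<Sum>w\<in>words n. prob (ones_path u w))"
    by (rule finite_measure_subadditive_finite) (auto simp: ones_path_event)
  also have "\<dots> \<le> \<epsilon>" using expected_ones_paths_le[where n=n and u=u] n by simp
  finally show "prob (long_ones_paths u) \<le> \<epsilon>" .
qed

lemma boundary_long_ones_paths:
  assumes sp: "\<omega> \<in> space M" and \<zeta>: "\<zeta> \<in> boundary X \<omega> u"
  shows "\<omega> \<in> long_ones_paths u"
proof -
  have in_tau: "\<And>j. j \<ge> length u \<Longrightarrow> map \<zeta> [0..<j] \<in> tau X \<omega> u"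
    using \<zeta> unfolding boundary_def by auto
  have prefix: "map \<zeta> [0..<length u] = u"
  proof -
    obtain w where w: "map \<zeta> [0..<length u] = u @ w" using in_tau[of "length u"] unfolding tau_def by auto
    then have "length (map \<zeta> [0..<length u]) = length (u @ w)" by (rule arg_cong)
    then have "w = []" by simp
    then show ?thesis using w by simp
  qed
  have "\<omega> \<in> ones_path u (map \<zeta> [length u..<length u + n])" for n
    unfolding ones_path_def
  proof (intro CollectI conjI allI impI sp)
    fix i assume "i \<le> length (map \<zeta> [length u..<length u + n])"
    then have "take i (map \<zeta> [length u..<length u + n]) = map \<zeta> [length u..<length u + i]"
      by (simp add: take_map take_upt min_def)
    then have eq: "u @ take i (map \<zeta> [length u..<length u + n]) = map \<zeta> [0..<length u + i]"
      using prefix upt_add_eq_append[of 0 "length u" i] by simp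
    have "map \<zeta> [0..<length u + i] \<in> tau X \<omega> u" by (rule in_tau) simp
    then have "\<forall>j\<in>{length u..length (map \<zeta> [0..<length u + i])}. X (take j (map \<zeta> [0..<length u + i])) \<omega>"
      unfolding tau_def by blast
    then have "X (take (length u + i) (map \<zeta> [0..<length u + i])) \<omega>" by (rule bspec) simp
    then have "X (map \<zeta> [0..<length u + i]) \<omega>" by simp
    then show "X (u @ take i (map \<zeta> [length u..<length u + n])) \<omega>" unfolding eq by simp
  qed
  moreover have "map \<zeta> [length u..<length u + n] \<in> words n" for n unfolding words_def by simp
  ultimately show ?thesis unfolding long_ones_paths_def by blast
qed

lemma AE_Theta_empty:
  assumes th: "theta nu < 0"
  shows "AE \<omega> in M. Theta X \<omega> = {}"
proof (rule AE_I')
  show "(\<Union>u. long_ones_paths u) \<in> null_sets M" using long_ones_paths_null[OF th] by auto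
  show "{\<omega>\<in>space M. Theta X \<omega> \<noteq> {}} \<subseteq> (\<Union>u. long_ones_paths u)"
    unfolding Theta_def using boundary_long_ones_paths by blast
qed

subsection \<open>The number of points of Stilde in each generation\<close>

text \<open>Markov's inequality at level (j+1)^2 2^(j+1) eta_j, where E #Stilde_(j+1) is at most
  2^(j+1) eta_j, gives tail probabilities bounded by 1/(j+1)^2, and 0 when eta_j = 0.\<close>
lemma prob_Stilde_count_exceeds:
  "prob {\<omega>\<in>space M. real (Suc j) ^ 2 * 2 ^ Suc j * eta nu j < real (card (Stilde_j X \<omega> (Suc j)))}
     \<le> (if eta nu j = 0 then 0 else 1 / real (Suc j) ^ 2)"
proof (cases "eta nu j = 0")
  case True
  have "{\<omega>\<in>space M. real (Suc j) ^ 2 * 2 ^ Suc j * eta nu j < real (card (Stilde_j X \<omega> (Suc j)))}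
      = {\<omega>\<in>space M. 1 \<le> real (card (Stilde_j X \<omega> (Suc j)))}"
    unfolding True by auto
  also have "prob \<dots> \<le> expected_Stilde (Suc j) / 1" by (rule prob_Stilde_count_ge) simp
  also have "\<dots> \<le> 0" using expected_Stilde_Suc[of j] True by simp
  finally show ?thesis using True by simp
next
  case False
  define T where "T = real (Suc j) ^ 2 * 2 ^ Suc j * eta nu j"
  have T: "T > 0" unfolding T_def using False eta_nonneg[of nu j] by simp
  have "prob {\<omega>\<in>space M. T < real (card (Stilde_j X \<omega> (Suc j)))}
      \<le> prob {\<omega>\<in>space M. T \<le> real (card (Stilde_j X \<omega> (Suc j)))}"
    by (intro finite_measure_mono Stilde_count_event) auto
  also have "\<dots> \<le> expected_Stilde (Suc j) / T" by (rule prob_Stilde_count_ge[OF T])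
  also have "\<dots> \<le> (2 ^ Suc j * eta nu j) / T"
    using expected_Stilde_Suc[of j] T by (simp add: divide_right_mono)
  also have "\<dots> = 1 / real (Suc j) ^ 2"
    using False unfolding T_def by (simp add: field_simps)
  finally show ?thesis using False unfolding T_def by simp
qed

lemma AE_Stilde_count_bound:
  "AE \<omega> in M. \<exists>\<kappa>t::real. \<kappa>t \<ge> 1 \<and> (\<forall>j\<ge>1.
      real (card (Stilde_j X \<omega> j)) \<le> \<kappa>t * 2 ^ j * eta nu (j - 1) * real j ^ 2)"
proof -
  define T where "T j = real (Suc j) ^ 2 * 2 ^ Suc j * eta nu j" for j
  define f where "f j \<omega> = real (card (Stilde_j X \<omega> (Suc j)))" for j \<omega>
  have bad: "prob {\<omega>\<in>space M. T j < f j \<omega>} \<le> (if eta nu j = 0 then 0 else 1 / real (Suc j) ^ 2)" for j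
    unfolding T_def f_def by (rule prob_Stilde_count_exceeds)
  have T_nonneg: "0 \<le> T j" for j unfolding T_def by (simp add: eta_nonneg)
  have T_zero: "prob {\<omega>\<in>space M. T j < f j \<omega>} = 0" if "T j = 0" for j
    using bad[of j] that measure_nonneg[of M] unfolding T_def by (simp add: order.antisym)
  have inv_sq: "summable (\<lambda>j. 1 / real (Suc j) ^ 2)"
    using inverse_power_summable[of 2, where 'a=real] summable_iff_shift[of "\<lambda>n. inverse (real n ^ 2)" 1]
    by (simp add: divide_inverse)
  have "prob {\<omega>\<in>space M. T j < f j \<omega>} \<le> 1 / real (Suc j) ^ 2" for j
  proof (cases "eta nu j = 0")
    case True
    then have "prob {\<omega>\<in>space M. T j < f j \<omega>} \<le> 0" using bad[of j] by simp
    moreover have "0 \<le> 1 / real (Suc j) ^ 2" by simp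
    ultimately show ?thesis by linarith
  qed (use bad[of j] in simp)
  then have summ: "summable (\<lambda>j. prob {\<omega>\<in>space M. T j < f j \<omega>})"
    by (intro summable_comparison_test'[OF inv_sq, where N=0]) (metis measure_nonneg real_norm_def abs_of_nonneg)
  have "AE \<omega> in M. \<exists>\<kappa>\<ge>1. \<forall>j. f j \<omega> \<le> \<kappa> * T j"
    by (rule AE_uniform_bound_Borel_Cantelli[OF _ summ T_nonneg T_zero])
      (auto simp: f_def intro: Stilde_count_event)
  then show ?thesis
  proof eventually_elim
    case (elim \<omega>)
    then obtain \<kappa> where \<kappa>: "\<kappa> \<ge> 1" "\<And>j. f j \<omega> \<le> \<kappa> * T j" by blast
    have "real (card (Stilde_j X \<omega> j)) \<le> \<kappa> * 2 ^ j * eta nu (j - 1) * real j ^ 2" if "j \<ge> 1" for j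
      using that \<kappa>(2)[of "j - 1"] unfolding f_def T_def by (cases j) (simp_all add: mult_ac)
    then show ?case using \<kappa>(1) by blast
  qed
qed

subsection \<open>The number of ones in each generation when theta \<ge> 0\<close>

text \<open>Normalised by the gamma product, the expected generation sizes grow at most
  subexponentially: the recursion expected_S_Suc has a subexponential inhomogeneity
  because htilde = infinity, and the gamma products decay subexponentially because
  theta \<ge> 0.\<close>
lemma expected_S_subexponential:
  assumes ht: "htilde nu hl = \<infinity>" and hl: "hl > 0"
    and th: "theta nu = ereal t" "t \<ge> 0" and jl: "jlow nu = enat J" and d: "\<delta> > 0"
  shows "\<exists>C K. \<forall>k\<ge>K. expected_S k \<le> C * (2 powr \<delta>) ^ k * (\<Prod>l\<in>{J..<k}. gamma nu l)"
proof -
  define P where "P k = (\<Prod>l\<in>{J..<k}. gamma nu l)" for k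
  note pos = gamma_pos_from_jlow[OF jl]
  have P_pos: "P k > 0" for k unfolding P_def using pos by (intro prod_pos) auto
  define z where "z = 2 powr (\<delta> / 2)"
  define x where "x = 2 powr \<delta>"
  have x: "x > 1" "x = z ^ 2" "z > 0"
    unfolding x_def z_def using d by (auto simp: powr_realpow[symmetric] powr_powr)
  have d2: "\<delta> / 2 > 0" using d by simp
  have "eventually (\<lambda>k. 2 ^ k * eta nu k \<le> z ^ k \<and> P (Suc k) * z ^ k \<ge> 1 \<and> k \<ge> J) sequentially"
    using eta_subexponential[OF ht hl d2] prod_gamma_not_too_small[OF th jl d2] eventually_ge_at_top[of J]
    unfolding z_def P_def by eventually_elim auto
  then obtain K where K: "\<And>k. k \<ge> K \<Longrightarrow> 2 ^ k * eta nu k \<le> z ^ k \<and> P (Suc k) * z ^ k \<ge> 1 \<and> k \<ge> J"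
    unfolding eventually_sequentially by blast
  define r where "r k = expected_S k / P k" for k
  have step: "r (Suc k) \<le> r k + 2 * x ^ k" if "k \<ge> K" for k
  proof -
    have eta_k: "2 ^ k * eta nu k \<le> z ^ k" and P_k: "1 / P (Suc k) \<le> z ^ k" and "k \<ge> J"
      using K[OF that] P_pos[of "Suc k"] by (auto simp: divide_le_eq mult.commute)
    then have P_Suc: "P (Suc k) = gamma nu k * P k" and "gamma nu k > 0"
      using pos unfolding P_def by (auto simp: prod.atLeastLessThan_Suc mult.commute)
    have "r (Suc k) \<le> (gamma nu k * expected_S k + 2 * (2 ^ k * eta nu k)) / P (Suc k)"
      unfolding r_def using expected_S_Suc[of k] P_pos[of "Suc k"] by (intro divide_right_mono) auto
    also have "\<dots> = r k + 2 * (2 ^ k * eta nu k) * (1 / P (Suc k))"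
      unfolding r_def P_Suc using \<open>gamma nu k > 0\<close> P_pos[of k] by (simp add: field_simps)
    also have "\<dots> \<le> r k + 2 * z ^ k * z ^ k"
      using eta_k P_k x(3) P_pos[of "Suc k"] by (intro add_left_mono mult_mono) (auto simp: eta_nonneg)
    also have "\<dots> = r k + 2 * x ^ k" unfolding x(2) by (simp add: power2_eq_square power_mult_distrib)
    finally show ?thesis .
  qed
  define C where "C = \<bar>r K\<bar> + 2 / (x - 1)"
  have "expected_S k \<le> C * x ^ k * P k" if "k \<ge> K" for k
  proof -
    have "r k \<le> r K + (2 / (x - 1)) * x ^ k" by (rule recursive_growth_bound[OF x(1) step that])
    also have "\<dots> \<le> C * x ^ k"
    proof -
      have "\<bar>r K\<bar> \<le> \<bar>r K\<bar> * x ^ k" using one_le_power[of x k] x(1) by (simp add: mult_le_cancel_left1)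
      then show ?thesis unfolding C_def using abs_ge_self[of "r K"] by (simp add: distrib_right)
    qed
    finally show ?thesis using P_pos[of k] unfolding r_def by (simp add: divide_le_eq mult_ac)
  qed
  then show ?thesis unfolding x_def P_def by blast
qed

text \<open>With alpha = (1 - theta) / 2, Markov's inequality at level 2^(alpha j) times the
  gamma product gives summable tail probabilities, since the expectations grow only like
  2^(alpha j / 2) times that product.\<close>
lemma AE_S_count_bound:
  assumes th0: "theta nu \<ge> 0" and th1: "theta nu < 1" and ht: "htilde nu hl = \<infinity>" and hl: "hl > 0"
  shows "AE \<omega> in M. \<exists>\<kappa>::real. \<kappa> \<ge> 1 \<and> (\<forall>j.
      real (card (S_set X \<omega> j)) \<le> \<kappa> * 2 powr ((1 - real_of_ereal (theta nu)) * real j / 2)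
          * (\<Prod>l\<in>{the_enat (jlow nu)..<j}. gamma nu l))"
proof -
  obtain J where jl: "jlow nu = enat J"
    using th0 unfolding theta_def by (cases "jlow nu") auto
  obtain t where th: "theta nu = ereal t" and t: "0 \<le> t" "t < 1"
    using th0 th1 by (cases "theta nu") auto
  define \<alpha> where "\<alpha> = (1 - t) / 2"
  have \<alpha>: "\<alpha> > 0" unfolding \<alpha>_def using t by simp
  define P where "P j = (\<Prod>l\<in>{J..<j}. gamma nu l)" for j
  have P_pos: "P j > 0" for j unfolding P_def using gamma_pos_from_jlow[OF jl] by (intro prod_pos) auto
  define T where "T j = (2 powr \<alpha>) ^ j * P j" for j
  define f where "f j \<omega> = real (card (S_set X \<omega> j))" for j \<omega>
  have T_pos: "T j > 0" for j unfolding T_def using P_pos by simp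
  then have T_ne: "T j \<noteq> 0" for j by (metis less_irrefl)
  obtain C K where C: "\<And>k. k \<ge> K \<Longrightarrow> expected_S k \<le> C * (2 powr (\<alpha> / 2)) ^ k * P k"
    using expected_S_subexponential[OF ht hl th t(1) jl, of "\<alpha> / 2"] \<alpha> unfolding P_def by auto
  define q where "q = 2 powr (\<alpha> / 2) / 2 powr \<alpha>"
  have "q = 2 powr (- (\<alpha> / 2))" unfolding q_def by (simp add: powr_diff[symmetric])
  then have q: "0 < q" "q < 1" using powr_less_mono[of "- (\<alpha> / 2)" 0 2] \<alpha> by auto
  have bad: "prob {\<omega>\<in>space M. T j < f j \<omega>} \<le> C * q ^ j" if "j \<ge> K" for j
  proof -
    have "prob {\<omega>\<in>space M. T j < f j \<omega>} \<le> prob {\<omega>\<in>space M. T j \<le> real (card (S_set X \<omega> j))}"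
      unfolding f_def by (intro finite_measure_mono S_count_event) auto
    also have "\<dots> \<le> expected_S j / T j" by (rule prob_S_count_ge[OF T_pos])
    also have "\<dots> \<le> C * (2 powr (\<alpha> / 2)) ^ j * P j / T j"
      using C[OF that] T_pos[of j] by (simp add: divide_right_mono)
    also have "\<dots> = C * q ^ j" unfolding T_def q_def using P_pos[of j] by (simp add: power_divide)
    finally show ?thesis .
  qed
  have "summable (\<lambda>j. prob {\<omega>\<in>space M. T j < f j \<omega>})"
    by (rule summable_comparison_test'[where N=K, OF summable_mult[OF summable_geometric]])
      (use q bad in auto)
  then have "AE \<omega> in M. \<exists>\<kappa>\<ge>1. \<forall>j. f j \<omega> \<le> \<kappa> * T j"
    using T_pos by (intro AE_uniform_bound_Borel_Cantelli) (auto simp: f_def T_ne intro: S_count_event less_imp_le)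
  moreover have "T j = 2 powr ((1 - real_of_ereal (theta nu)) * real j / 2) * (\<Prod>l\<in>{the_enat (jlow nu)..<j}. gamma nu l)" for j
    unfolding T_def P_def \<alpha>_def th jl by (simp add: powr_realpow[symmetric] powr_powr mult_ac)
  ultimately show ?thesis unfolding f_def by (simp add: mult.assoc)
qed

end

theorem mainTheorem11:
  fixes M :: "'a measure"
    and nu :: "bool \<Rightarrow> nat \<Rightarrow> (bool \<times> bool) pmf"
    and X :: "bool list \<Rightarrow> 'a \<Rightarrow> bool"
    and hl :: real
  assumes proc: "branching_process M nu X"
    and hl_pos: "hl > 0"
    and div: "(\<Sum>j. ennreal (2 ^ j * eta nu j)) = \<top>"
    and theta_lt: "theta nu < 1"
    and htilde_inf: "htilde nu hl = \<infinity>"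
  shows "AE \<omega> in M.
     (\<forall>u. \<exists>w. w \<noteq> [] \<and> u @ w \<in> Stilde X \<omega>) \<and>
     (\<exists>\<kappa>t::real. \<kappa>t \<ge> 1 \<and> (\<forall>j\<ge>1.
        real (card (Stilde_j X \<omega> j)) \<le> \<kappa>t * 2 ^ j * eta nu (j - 1) * real j ^ 2)) \<and>
     (theta nu < 0 \<longrightarrow> Theta X \<omega> = {}) \<and>
     (theta nu \<ge> 0 \<longrightarrow> (\<exists>\<kappa>::real. \<kappa> \<ge> 1 \<and> (\<forall>j.
        real (card (S_set X \<omega> j)) \<le> \<kappa> * 2 powr ((1 - real_of_ereal (theta nu)) * real j / 2)
            * (\<Prod>l\<in>{the_enat (jlow nu)..<j}. gamma nu l))))"
proof -
  interpret branching M nu X by (rule branching.intro[OF proc])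
  have Theta: "AE \<omega> in M. theta nu < 0 \<longrightarrow> Theta X \<omega> = {}"
    using AE_Theta_empty by (cases "theta nu < 0") auto
  have S: "AE \<omega> in M. theta nu \<ge> 0 \<longrightarrow> (\<exists>\<kappa>::real. \<kappa> \<ge> 1 \<and> (\<forall>j.
        real (card (S_set X \<omega> j)) \<le> \<kappa> * 2 powr ((1 - real_of_ereal (theta nu)) * real j / 2)
            * (\<Prod>l\<in>{the_enat (jlow nu)..<j}. gamma nu l)))"
    using AE_S_count_bound[OF _ theta_lt htilde_inf hl_pos] by (cases "theta nu \<ge> 0") auto
  from AE_Stilde_below_every_node[OF div theta_lt] AE_Stilde_count_bound Theta S
  show ?thesis by eventually_elim blast
qed

end
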